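(* Let $P$ be a non-centered \textsf{Z}-convex polyomino which is descending. Let $c_1$ be the leftmost column of $P$, let $X$ be the row of $P$ containing the top cell of $c_1$ and $Y$ the row containing the bottom cell of $c_1$. Let $S$ be the column of $P$ containing the rightmost cell of $X$, and $T$ the column of $P$ containing the rightmost cell of $Y$. Let $\theta$ be the set of cells of $P$ lying in columns strictly to the right of $T$. Then $\theta$ contains no cell lower than the lowest cell of $P$ in the column $S$.
   Context: A cell is a unit square of $\mathbb Z\times\mathbb Z$; a polyomino is a finite connected union of cells with no cut point. A polyomino is convex if its intersection with every vertical and every horizontal line of cells is connected; a convex polyomino is centered if some row touches both the left and right sides of its minimal bounding rectangle. A path in a polyomino is a self-avoiding sequence of unit steps $N,S,E,W$ between adjacent cells; it is monotone if it uses only two step types; a change of direction is a pair of consecutive distinct steps. A convex polyomino is \textsf{Z}-convex if every pair of its cells is connected by a monotone path with at most two changes of direction. For a non-centered convex polyomino with $c_1,X,Y$ as in the claim, its rightmost column lies entirely above $X$ or entirely below $Y$; it is called descending if its rightmost column lies entirely below the row $Y$. *)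

theory Defs
  imports Main
begin

text \<open>A cell is identified with its lower-left corner (x,y) in Z x Z:
 x is the column index, y the row index (y grows upward).\<close>
type_synonym cell = "int \<times> int"

definition adjacent :: "cell \<Rightarrow> cell \<Rightarrow> bool" where
  "adjacent a b \<longleftrightarrow> \<bar>fst a - fst b\<bar> + \<bar>snd a - snd b\<bar> = 1"

definition is_path :: "cell set \<Rightarrow> cell list \<Rightarrow> bool" where
  "is_path P p \<longleftrightarrow> p \<noteq> [] \<and> distinct p \<and> set p \<subseteq> P \<and>
     (\<forall>i. Suc i < length p \<longrightarrow> adjacent (p ! i) (p ! Suc i))"

definition steps :: "cell list \<Rightarrow> cell list" where
  "steps p = map (\<lambda>(a, b). (fst b - fst a, snd b - snd a)) (zip p (tl p))"

definition monotone_path :: "cell list \<Rightarrow> bool" where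
  "monotone_path p \<longleftrightarrow> card (set (steps p)) \<le> 2"

definition changes :: "cell list \<Rightarrow> nat" where
  "changes p = length (filter (\<lambda>(s, t). s \<noteq> t) (zip (steps p) (tl (steps p))))"

definition polyomino :: "cell set \<Rightarrow> bool" where
  "polyomino P \<longleftrightarrow> finite P \<and> P \<noteq> {} \<and>
     (\<forall>a\<in>P. \<forall>b\<in>P. \<exists>p. is_path P p \<and> hd p = a \<and> last p = b)"

definition convex_polyomino :: "cell set \<Rightarrow> bool" where
  "convex_polyomino P \<longleftrightarrow> polyomino P \<and>
     (\<forall>x y1 y2 y. (x, y1) \<in> P \<longrightarrow> (x, y2) \<in> P \<longrightarrow> y1 \<le> y \<longrightarrow> y \<le> y2 \<longrightarrow> (x, y) \<in> P) \<and>
     (\<forall>y x1 x2 x. (x1, y) \<in> P \<longrightarrow> (x2, y) \<in> P \<longrightarrow> x1 \<le> x \<longrightarrow> x \<le> x2 \<longrightarrow> (x, y) \<in> P)"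

definition minx :: "cell set \<Rightarrow> int" where "minx P = Min (fst ` P)"
definition maxx :: "cell set \<Rightarrow> int" where "maxx P = Max (fst ` P)"

definition centered :: "cell set \<Rightarrow> bool" where
  "centered P \<longleftrightarrow> convex_polyomino P \<and>
     (\<exists>y. (minx P, y) \<in> P \<and> (maxx P, y) \<in> P)"

definition Z_convex :: "cell set \<Rightarrow> bool" where
  "Z_convex P \<longleftrightarrow> convex_polyomino P \<and>
     (\<forall>a\<in>P. \<forall>b\<in>P. \<exists>p. is_path P p \<and> hd p = a \<and> last p = b \<and>
        monotone_path p \<and> changes p \<le> 2)"

definition rowX :: "cell set \<Rightarrow> int" where "rowX P = Max {y. (minx P, y) \<in> P}"
definition rowY :: "cell set \<Rightarrow> int" where "rowY P = Min {y. (minx P, y) \<in> P}"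

definition colS :: "cell set \<Rightarrow> int" where "colS P = Max {x. (x, rowX P) \<in> P}"
definition colT :: "cell set \<Rightarrow> int" where "colT P = Max {x. (x, rowY P) \<in> P}"

definition descending :: "cell set \<Rightarrow> bool" where
  "descending P \<longleftrightarrow> (\<forall>y. (maxx P, y) \<in> P \<longrightarrow> y < rowY P)"

definition theta :: "cell set \<Rightarrow> cell set" where
  "theta P = {c \<in> P. fst c > colT P}"

end

theory Submission
  imports Defs
begin

text \<open>A monotone path with at most two changes of direction from a cell a to a cell c strictly
south-east of it is a staircase E*S*E* or S*E*S*.  Hence in a Z-convex polyomino the columns of a
and c meet a common row, or the rows of a and c meet a common column.  Applied to the top cell of
the leftmost column and a cell of the rightmost column, descent shows that column S reaches below
row Y.  Applied to a cell of theta below row Y, row and column convexity together with the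
maximality of S and T show that the row of that cell meets column S.  Cells of theta in or above
row Y lie above the cell of column S found before.\<close>

abbreviation east :: cell where "east \<equiv> (1, 0)"
abbreviation south :: cell where "south \<equiv> (0, -1)"

definition count_changes :: "'a list \<Rightarrow> nat" where
  "count_changes s = length (filter (\<lambda>(u, v). u \<noteq> v) (zip s (tl s)))"

lemma changes_eq_count_changes: "changes p = count_changes (steps p)"
  by (simp add: changes_def count_changes_def)

lemma count_changes_simps [simp]:
  "count_changes [] = 0"
  "count_changes [u] = 0"
  "count_changes (u # v # s) = (if u = v then 0 else 1) + count_changes (v # s)"
  by (auto simp: count_changes_def)

lemma count_changes_eq_0: "count_changes s = 0 \<Longrightarrow> set s \<subseteq> {hd s}"
  by (induction s rule: induct_list012) (auto split: if_splits)

lemma count_changes_map_inj: "inj f \<Longrightarrow> count_changes (map f s) = count_changes s"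
  by (induction s rule: induct_list012) (auto simp: inj_eq)

lemma steps_simps [simp]:
  "steps [] = []"
  "steps [a] = []"
  "steps (a # b # q) = (fst b - fst a, snd b - snd a) # steps (b # q)"
  by (auto simp: steps_def)

lemma steps_Cons_Nil_iff: "steps (a # q) = [] \<longleftrightarrow> q = []"
  by (cases q) auto

lemma last_minus_hd_eq_sum_steps:
  assumes "p \<noteq> []"
  shows "fst (last p) - fst (hd p) = sum_list (map fst (steps p))"
    and "snd (last p) - snd (hd p) = sum_list (map snd (steps p))"
  using assms by (induction p rule: induct_list012) auto

lemma snd_eq_if_steps_east: "set (steps p) \<subseteq> {east} \<Longrightarrow> c \<in> set p \<Longrightarrow> snd c = snd (hd p)"
  by (induction p rule: induct_list012) auto

text \<open>Reflection in the anti-diagonal.  It swaps east and south steps, so each statement about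
paths starting eastwards follows from its twin for paths starting southwards.\<close>

definition flip :: "cell \<Rightarrow> cell" where
  "flip c = (- snd c, - fst c)"

lemma flip_flip [simp]: "flip (flip c) = c"
  by (simp add: flip_def)

lemma inj_flip: "inj flip"
  by (metis flip_flip injI)

lemma flip_east [simp]: "flip east = south" and flip_south [simp]: "flip south = east"
  by (simp_all add: flip_def)

lemma steps_map_flip: "steps (map flip p) = map flip (steps p)"
  by (induction p rule: induct_list012) (auto simp: flip_def)

lemma south_then_east_path_corner:
  assumes "steps p = south # ds" "set ds \<subseteq> {east, south}" "count_changes (steps p) \<le> 1"
  shows "(fst (hd p), snd (last p)) \<in> set p"
  using assms
proof (induction p arbitrary: ds rule: induct_list012)
  case (3 a b q)
  then have a: "a = (fst b, snd b + 1)" and ds: "ds = steps (b # q)" by (auto simp: prod_eq_iff)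
  have changes: "count_changes (south # steps (b # q)) \<le> 1"
    using "3.prems"(3) unfolding "3.prems"(1) ds .
  consider "steps (b # q) = []"
    | s where "steps (b # q) = east # s"
    | s where "steps (b # q) = south # s"
    using "3.prems"(2) ds by (cases "steps (b # q)") auto
  then show ?case
  proof cases
    case 1
    then show ?thesis by (simp add: a steps_Cons_Nil_iff)
  next
    case (2 s)
    then have "set (steps (b # q)) \<subseteq> {east}"
      using changes count_changes_eq_0[of "east # s"] 2 by simp
    then have "snd (last (b # q)) = snd b"
      using snd_eq_if_steps_east by (metis last_in_set list.distinct(1) list.sel(1))
    then show ?thesis by (simp add: a)
  next
    case (3 s)
    then have "(fst b, snd (last (b # q))) \<in> set (b # q)"
      using "3.IH"(2)[of s] "3.prems"(2) changes ds by simp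
    then show ?thesis by (simp add: a)
  qed
qed auto

lemma east_then_south_path_corner:
  assumes "steps p = east # ds" "set ds \<subseteq> {east, south}" "count_changes (steps p) \<le> 1"
  shows "(fst (last p), snd (hd p)) \<in> set p"
proof -
  have "p \<noteq> []" using assms(1) by auto
  have "(fst (hd (map flip p)), snd (last (map flip p))) \<in> set (map flip p)"
  proof (rule south_then_east_path_corner)
    show "steps (map flip p) = south # map flip ds" using assms(1) by (simp add: steps_map_flip)
    show "set (map flip ds) \<subseteq> {east, south}" using assms(2) by auto
    show "count_changes (steps (map flip p)) \<le> 1"
      using assms(3) by (simp add: steps_map_flip count_changes_map_inj inj_flip)
  qed
  then show ?thesis using \<open>p \<noteq> []\<close> by (auto simp: hd_map last_map flip_def)
qed

lemma south_first_path_common_row: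
  assumes "steps p = south # ds" "set ds \<subseteq> {east, south}" "count_changes (steps p) \<le> 2"
  shows "\<exists>r. (fst (hd p), r) \<in> set p \<and> (fst (last p), r) \<in> set p"
  using assms
proof (induction p arbitrary: ds rule: induct_list012)
  case (3 a b q)
  then have a: "a = (fst b, snd b + 1)" and ds: "ds = steps (b # q)" by (auto simp: prod_eq_iff)
  have changes: "count_changes (south # steps (b # q)) \<le> 2"
    using "3.prems"(3) unfolding "3.prems"(1) ds .
  consider "steps (b # q) = []"
    | s where "steps (b # q) = east # s"
    | s where "steps (b # q) = south # s"
    using "3.prems"(2) ds by (cases "steps (b # q)") auto
  then show ?case
  proof cases
    case 1
    then show ?thesis by (auto simp: a steps_Cons_Nil_iff intro!: exI[of _ "snd b"])
  next
    case (2 s)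
    then have "(fst (last (b # q)), snd b) \<in> set (b # q)"
      using east_then_south_path_corner[of "b # q" s] "3.prems"(2) changes ds by auto
    then show ?thesis by (auto simp: a intro!: exI[of _ "snd b"])
  next
    case (3 s)
    then have "\<exists>r. (fst b, r) \<in> set (b # q) \<and> (fst (last (b # q)), r) \<in> set (b # q)"
      using "3.IH"(2)[of s] "3.prems"(2) changes ds by simp
    then show ?thesis by (auto simp: a)
  qed
qed auto

lemma east_first_path_common_column:
  assumes "steps p = east # ds" "set ds \<subseteq> {east, south}" "count_changes (steps p) \<le> 2"
  shows "\<exists>k. (k, snd (hd p)) \<in> set p \<and> (k, snd (last p)) \<in> set p"
proof -
  have "p \<noteq> []" using assms(1) by auto
  have "\<exists>r. (fst (hd (map flip p)), r) \<in> set (map flip p) \<and>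
             (fst (last (map flip p)), r) \<in> set (map flip p)"
  proof (rule south_first_path_common_row)
    show "steps (map flip p) = south # map flip ds" using assms(1) by (simp add: steps_map_flip)
    show "set (map flip ds) \<subseteq> {east, south}" using assms(2) by auto
    show "count_changes (steps (map flip p)) \<le> 2"
      using assms(3) by (simp add: steps_map_flip count_changes_map_inj inj_flip)
  qed
  then show ?thesis using \<open>p \<noteq> []\<close> by (force simp: hd_map last_map flip_def)
qed

lemma east_south_path_common_row_or_column:
  assumes "p \<noteq> []" "set (steps p) \<subseteq> {east, south}" "count_changes (steps p) \<le> 2"
  shows "(\<exists>r. (fst (hd p), r) \<in> set p \<and> (fst (last p), r) \<in> set p) \<or>
         (\<exists>k. (k, snd (hd p)) \<in> set p \<and> (k, snd (last p)) \<in> set p)"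
proof (cases "steps p")
  case Nil
  then obtain a where "p = [a]" using assms(1) by (cases p) (auto simp: steps_Cons_Nil_iff)
  then show ?thesis by (auto intro!: exI[of _ "snd a"])
next
  case (Cons d ds)
  then have "d = east \<or> d = south" and "set ds \<subseteq> {east, south}" using assms(2) by auto
  then show ?thesis
    using east_first_path_common_column south_first_path_common_row Cons assms(3) by blast
qed

lemma is_path_steps_unit:
  assumes "is_path P p" "d \<in> set (steps p)"
  shows "\<bar>fst d\<bar> + \<bar>snd d\<bar> = 1"
proof -
  obtain n where "Suc n < length p"
    and "d = (fst (p ! Suc n) - fst (p ! n), snd (p ! Suc n) - snd (p ! n))"
    using assms(2) unfolding steps_def by (force simp: set_zip nth_tl)
  then show ?thesis
    using assms(1) unfolding is_path_def adjacent_def by (auto simp: abs_minus_commute)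
qed

lemma east_in_steps:
  assumes "is_path P p" "fst (hd p) < fst (last p)"
  shows "east \<in> set (steps p)"
proof -
  have "0 < sum_list (map fst (steps p))"
    using assms last_minus_hd_eq_sum_steps(1)[of p] by (simp add: is_path_def)
  then obtain d where d: "d \<in> set (steps p)" and sign: "0 < fst d"
    using sum_list_nonpos[of "map fst (steps p)"] by force
  have "\<bar>fst d\<bar> + \<bar>snd d\<bar> = 1" using is_path_steps_unit assms(1) d .
  then have "d = east" using sign by (cases d) auto
  then show ?thesis using d by simp
qed

lemma south_in_steps:
  assumes "is_path P p" "snd (last p) < snd (hd p)"
  shows "south \<in> set (steps p)"
proof -
  have "sum_list (map snd (steps p)) < 0"
    using assms last_minus_hd_eq_sum_steps(2)[of p] by (simp add: is_path_def)
  then obtain d where d: "d \<in> set (steps p)" and sign: "snd d < 0"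
    using sum_list_nonneg[of "map snd (steps p)"] by force
  have "\<bar>fst d\<bar> + \<bar>snd d\<bar> = 1" using is_path_steps_unit assms(1) d .
  then have "d = south" using sign by (cases d) auto
  then show ?thesis using d by simp
qed

lemma Z_convex_common_row_or_column:
  assumes "Z_convex P" "a \<in> P" "c \<in> P" "fst a < fst c" "snd c < snd a"
  shows "(\<exists>r. (fst a, r) \<in> P \<and> (fst c, r) \<in> P) \<or>
         (\<exists>k. (k, snd a) \<in> P \<and> (k, snd c) \<in> P)"
proof -
  obtain p where p: "is_path P p" "hd p = a" "last p = c"
    and monotone: "monotone_path p" and changes: "changes p \<le> 2"
    using assms(1-3) unfolding Z_convex_def by blast
  have "{east, south} \<subseteq> set (steps p)"
    using east_in_steps south_in_steps p assms(4,5) by blast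
  moreover have "card (set (steps p)) \<le> card {east, south}"
    using monotone by (simp add: monotone_path_def)
  ultimately have "set (steps p) = {east, south}"
    by (metis card_seteq finite_set)
  then have "(\<exists>r. (fst a, r) \<in> set p \<and> (fst c, r) \<in> set p) \<or>
             (\<exists>k. (k, snd a) \<in> set p \<and> (k, snd c) \<in> set p)"
    using east_south_path_common_row_or_column[of p] p changes
    by (simp add: is_path_def changes_eq_count_changes)
  moreover have "set p \<subseteq> P" using p(1) by (simp add: is_path_def)
  ultimately show ?thesis by blast
qed

lemma finite_column: "finite P \<Longrightarrow> finite {y. (x, y) \<in> P}"
  using finite_vimageI[of P "Pair x"] by (simp add: vimage_def inj_on_def)

lemma finite_row: "finite P \<Longrightarrow> finite {x. (x, y) \<in> P}"
  using finite_vimageI[of P "\<lambda>x. (x, y)"] by (simp add: vimage_def inj_on_def)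

lemma convex_polyomino_column_interval:
  "convex_polyomino P \<Longrightarrow> (x, y1) \<in> P \<Longrightarrow> (x, y2) \<in> P \<Longrightarrow> y1 \<le> y \<Longrightarrow> y \<le> y2 \<Longrightarrow> (x, y) \<in> P"
  unfolding convex_polyomino_def by blast

lemma convex_polyomino_row_interval:
  "convex_polyomino P \<Longrightarrow> (x1, y) \<in> P \<Longrightarrow> (x2, y) \<in> P \<Longrightarrow> x1 \<le> x \<Longrightarrow> x \<le> x2 \<Longrightarrow> (x, y) \<in> P"
  unfolding convex_polyomino_def by blast

lemma Z_convex_polyomino: "Z_convex P \<Longrightarrow> convex_polyomino P"
  unfolding Z_convex_def by (rule conjunct1)

lemma convex_polyomino_polyomino: "convex_polyomino P \<Longrightarrow> polyomino P"
  unfolding convex_polyomino_def by (rule conjunct1)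

lemma polyomino_finite: "polyomino P \<Longrightarrow> finite P"
  unfolding polyomino_def by (rule conjunct1)

lemma
  assumes "finite P" "c \<in> P"
  shows minx_le: "minx P \<le> fst c" and le_maxx: "fst c \<le> maxx P"
  using assms by (auto simp: minx_def maxx_def)

lemma
  assumes "polyomino P"
  shows minx_column_nonempty: "\<exists>y. (minx P, y) \<in> P"
    and maxx_column_nonempty: "\<exists>y. (maxx P, y) \<in> P"
proof -
  have "finite (fst ` P)" "fst ` P \<noteq> {}"
    using assms by (auto simp: polyomino_def)
  then have "minx P \<in> fst ` P" "maxx P \<in> fst ` P"
    unfolding minx_def maxx_def by (auto intro: Min_in Max_in)
  then show "\<exists>y. (minx P, y) \<in> P" "\<exists>y. (maxx P, y) \<in> P" by force+
qed

lemma
  assumes "polyomino P"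
  shows rowX_mem: "(minx P, rowX P) \<in> P" and rowY_mem: "(minx P, rowY P) \<in> P"
    and rowY_le: "(minx P, y) \<in> P \<Longrightarrow> rowY P \<le> y"
proof -
  have "finite {y. (minx P, y) \<in> P}" "{y. (minx P, y) \<in> P} \<noteq> {}"
    using finite_column[OF polyomino_finite[OF assms]] minx_column_nonempty[OF assms] by auto
  then show "(minx P, rowX P) \<in> P" "(minx P, rowY P) \<in> P" "(minx P, y) \<in> P \<Longrightarrow> rowY P \<le> y"
    unfolding rowX_def rowY_def using Max_in Min_in Min_le by auto
qed

lemma rowY_le_rowX: "polyomino P \<Longrightarrow> rowY P \<le> rowX P"
  using rowX_mem rowY_le by blast

lemma colS_mem: "polyomino P \<Longrightarrow> (colS P, rowX P) \<in> P"
  unfolding colS_def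
  by (metis (mono_tags) Max_in empty_iff finite_row mem_Collect_eq polyomino_finite rowX_mem)

lemma le_colS: "finite P \<Longrightarrow> (x, rowX P) \<in> P \<Longrightarrow> x \<le> colS P"
  unfolding colS_def by (simp add: finite_row)

lemma le_colT: "finite P \<Longrightarrow> (x, rowY P) \<in> P \<Longrightarrow> x \<le> colT P"
  unfolding colT_def by (simp add: finite_row)

lemma Z_convex_colS_mem_if_right_of_colT_below_rowY:
  assumes "Z_convex P" "(x, y) \<in> P" "colT P < x" "y < rowY P"
  shows "(colS P, y) \<in> P"
proof -
  have convex: "convex_polyomino P" and poly: "polyomino P" and fin: "finite P"
    using assms(1) Z_convex_polyomino convex_polyomino_polyomino polyomino_finite by blast+
  have column_x_below: "r < rowY P" if "(x, r) \<in> P" for r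
  proof (rule ccontr)
    assume "\<not> r < rowY P"
    then have "(x, rowY P) \<in> P"
      using convex_polyomino_column_interval[OF convex assms(2) that] assms(4) by simp
    then show False using le_colT[OF fin] assms(3) by fastforce
  qed
  have "minx P \<le> colT P" using le_colT[OF fin rowY_mem[OF poly]] .
  then have "minx P < x" using assms(3) by simp
  moreover have "y < rowX P" using assms(4) rowY_le_rowX[OF poly] by simp
  ultimately consider r where "(minx P, r) \<in> P" "(x, r) \<in> P"
    | k where "(k, rowX P) \<in> P" "(k, y) \<in> P"
    using Z_convex_common_row_or_column[OF assms(1) rowX_mem[OF poly] assms(2)] by auto
  then show ?thesis
  proof cases
    case (1 r)
    then show ?thesis using rowY_le[OF poly] column_x_below by fastforce
  next
    case (2 k)
    show ?thesis
    proof (cases "colS P \<le> x")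
      case True
      then show ?thesis
        using convex_polyomino_row_interval[OF convex 2(2) assms(2)] le_colS[OF fin 2(1)] by simp
    next
      case False
      then have "(x, rowX P) \<in> P"
        using convex_polyomino_row_interval[OF convex rowX_mem[OF poly] colS_mem[OF poly]]
          \<open>minx P < x\<close> by simp
      then show ?thesis using column_x_below rowY_le_rowX[OF poly] by fastforce
    qed
  qed
qed

lemma descending_colS_reaches_below_rowY:
  assumes "Z_convex P" "descending P"
  shows "\<exists>y < rowY P. (colS P, y) \<in> P"
proof -
  have convex: "convex_polyomino P" and poly: "polyomino P" and fin: "finite P"
    using assms(1) Z_convex_polyomino convex_polyomino_polyomino polyomino_finite by blast+
  have column_maxx_below: "r < rowY P" if "(maxx P, r) \<in> P" for r
    using assms(2) that by (simp add: descending_def)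
  obtain y where y: "(maxx P, y) \<in> P" using maxx_column_nonempty[OF poly] ..
  have "minx P \<noteq> maxx P" using column_maxx_below rowY_mem[OF poly] by fastforce
  then have "minx P < maxx P" using minx_le[OF fin y] by simp
  moreover have "y < rowX P" using column_maxx_below[OF y] rowY_le_rowX[OF poly] by simp
  ultimately consider r where "(minx P, r) \<in> P" "(maxx P, r) \<in> P"
    | k where "(k, rowX P) \<in> P" "(k, y) \<in> P"
    using Z_convex_common_row_or_column[OF assms(1) rowX_mem[OF poly] y] by auto
  then show ?thesis
  proof cases
    case (1 r)
    then show ?thesis using rowY_le[OF poly] column_maxx_below by fastforce
  next
    case (2 k)
    have "colS P \<le> maxx P" using le_maxx[OF fin colS_mem[OF poly]] by simp
    then have "(colS P, y) \<in> P"
      using convex_polyomino_row_interval[OF convex 2(2) y] le_colS[OF fin 2(1)] by simp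
    then show ?thesis using column_maxx_below[OF y] by blast
  qed
qed

theorem mainTheorem3:
  fixes P :: "cell set"
  assumes "Z_convex P" and "\<not> centered P" and "descending P"
  shows "\<forall>c \<in> theta P. snd c \<ge> Min {y. (colS P, y) \<in> P}"
proof
  fix c assume "c \<in> theta P"
  then have c: "(fst c, snd c) \<in> P" "colT P < fst c" by (simp_all add: theta_def)
  have "finite P"
    using assms(1) by (intro polyomino_finite convex_polyomino_polyomino Z_convex_polyomino)
  then have fin: "finite {y. (colS P, y) \<in> P}" by (rule finite_column)
  show "Min {y. (colS P, y) \<in> P} \<le> snd c"
  proof (cases "snd c < rowY P")
    case True
    then have "(colS P, snd c) \<in> P"
      using Z_convex_colS_mem_if_right_of_colT_below_rowY[OF assms(1) c] by blast
    then show ?thesis using fin by simp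
  next
    case False
    obtain y where "y < rowY P" "(colS P, y) \<in> P"
      using descending_colS_reaches_below_rowY[OF assms(1,3)] by blast
    then show ?thesis using Min_le[OF fin, of y] False by simp
  qed
qed

end
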